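(* In the standing setting, there exists $c=c(n,p,M_0)$ such that for all $t\in[0,T^* )$ and all $x\in\mathbb S^n$, $$0<c^{-1}\le\sinh(u(t,x))\,e^{-\frac{t}{n^p}}\le c\qquad\text{and}\qquad \coth u(t,x)-1\le c\,e^{-\frac{2}{n^p}t}.$$
   Context: Standing setting: $n\ge2$; $\mathbb H^{n+1}$ in geodesic polar coordinates around a fixed point, metric $dr^2+\sinh^2r\,\sigma_{ij}dx^idx^j$ ($\sigma$ round metric on $\mathbb S^n$). $\Gamma\subset\mathbb R^n$ is an open convex symmetric cone containing $\Gamma_+=\{\kappa_i>0\ \forall i\}$; $F\in C^\infty(\Gamma)\cap C^0(\bar\Gamma)$ is symmetric, monotone ($\partial F/\partial\kappa_i>0$), concave, $1$-homogeneous, with $F>0$ on $\Gamma$, $F=0$ on $\partial\Gamma$, $F(1,\dots,1)=n$. $p>0$, and $\Gamma=\Gamma_+$ if $p>1$. $M_0$ is a smooth closed embedded hypersurface whose principal curvatures lie in $\Gamma$ everywhere ($F$-admissible) and which is a graph $M_0=\operatorname{graph}u(0,\cdot)$ over $\mathbb S^n$. The flow is $\dot x=F^{-p}\nu$, $x(0)=M_0$ ($\nu$ outward normal, $F$ evaluated at the principal curvatures of $M_t$), on its maximal smooth existence interval $[0,T^* )$, where the leaves $M_t$ are $F$-admissible graphs $\operatorname{graph}u(t,\cdot)$ over $\mathbb S^n$. *)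

theory Defs
  imports "HOL-Analysis.Analysis"
begin

definition dd :: "('a::real_normed_vector \<Rightarrow> 'b::real_normed_vector) \<Rightarrow> 'a \<Rightarrow> 'a \<Rightarrow> 'b" where
  "dd f x v = vector_derivative (\<lambda>s. f (x + s *\<^sub>R v)) (at 0)"

fun ddn :: "'a::real_normed_vector list \<Rightarrow> ('a \<Rightarrow> 'b::real_normed_vector) \<Rightarrow> 'a \<Rightarrow> 'b" where
  "ddn [] f = f"
| "ddn (v # vs) f = (\<lambda>x. dd (ddn vs f) x v)"

definition smooth_on :: "'a::euclidean_space set \<Rightarrow> ('a \<Rightarrow> 'b::real_normed_vector) \<Rightarrow> bool" where
  "smooth_on S f \<longleftrightarrow> open S \<and>
     (\<forall>vs. continuous_on S (ddn vs f) \<and>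
       (\<forall>x\<in>S. \<forall>v. (\<lambda>s. ddn vs f (x + s *\<^sub>R v)) differentiable (at 0)))"

definition smooth_on_set :: "'a::euclidean_space set \<Rightarrow> ('a \<Rightarrow> 'b::real_normed_vector) \<Rightarrow> bool" where
  "smooth_on_set A f \<longleftrightarrow> (\<exists>S g. A \<subseteq> S \<and> smooth_on S g \<and> (\<forall>x\<in>A. g x = f x))"

text \<open>Minkowski product on R x R^(n+1); H^(n+1) = {X. mink X X = -1, first coord > 0}.
  The point at geodesic polar coordinates (r, x), x in S^n, is (cosh r, sinh r x),
  which realises the metric dr^2 + sinh^2 r sigma.\<close>
definition mink :: "real \<times> (real^'m) \<Rightarrow> real \<times> (real^'m) \<Rightarrow> real" where
  "mink X Y = - fst X * fst Y + snd X \<bullet> snd Y"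

definition sphere_n :: "(real^'m) set" where
  "sphere_n = {x. norm x = 1}"

text \<open>Position map of the radial graph of w, w : S^n -> R, extended 0-homogeneously to R^(n+1) - {0}.\<close>
definition gpos :: "(real^'m \<Rightarrow> real) \<Rightarrow> real^'m \<Rightarrow> real \<times> (real^'m)" where
  "gpos w y = (cosh (w (y /\<^sub>R norm y)), sinh (w (y /\<^sub>R norm y)) *\<^sub>R (y /\<^sub>R norm y))"

text \<open>Radial unit vector field d/dr at the point of the graph over x.\<close>
definition radial :: "(real^'m \<Rightarrow> real) \<Rightarrow> real^'m \<Rightarrow> real \<times> (real^'m)" where
  "radial w x = (sinh (w x), cosh (w x) *\<^sub>R x)"

definition tang :: "real^'m \<Rightarrow> (real^'m) set" where
  "tang x = {v. v \<bullet> x = 0}"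

definition gmet :: "(real^'m \<Rightarrow> real) \<Rightarrow> real^'m \<Rightarrow> real^'m \<Rightarrow> real^'m \<Rightarrow> real" where
  "gmet w x v v' = mink (dd (gpos w) x v) (dd (gpos w) x v')"

definition sff :: "(real^'m \<Rightarrow> real) \<Rightarrow> real^'m \<Rightarrow> real \<times> (real^'m) \<Rightarrow> real^'m \<Rightarrow> real^'m \<Rightarrow> real" where
  "sff w x N v v' = - mink (dd (\<lambda>y. dd (gpos w) y v') x v) N"

definition outer_normal :: "(real^'m \<Rightarrow> real) \<Rightarrow> real^'m \<Rightarrow> real \<times> (real^'m) \<Rightarrow> bool" where
  "outer_normal w x N \<longleftrightarrow> mink N N = 1 \<and> mink N (gpos w x) = 0 \<and>
     (\<forall>v\<in>tang x. mink N (dd (gpos w) x v) = 0) \<and> mink N (radial w x) > 0"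

definition principal_curvatures ::
  "(real^'m \<Rightarrow> real) \<Rightarrow> real^'m \<Rightarrow> real \<times> (real^'m) \<Rightarrow> real^'n \<Rightarrow> bool" where
  "principal_curvatures w x N \<kappa> \<longleftrightarrow>
     (\<exists>e :: 'n \<Rightarrow> real^'m. (\<forall>i. e i \<in> tang x) \<and>
        (\<forall>i j. gmet w x (e i) (e j) = (if i = j then 1 else 0)) \<and>
        (\<forall>i j. sff w x N (e i) (e j) = (if i = j then \<kappa> $ i else 0)))"

definition pos_cone :: "(real^'n) set" where
  "pos_cone = {\<kappa>. \<forall>i. \<kappa> $ i > 0}"

definition admissible_cone :: "(real^'n) set \<Rightarrow> bool" where
  "admissible_cone \<Gamma> \<longleftrightarrow> open \<Gamma> \<and> convex \<Gamma> \<and>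
     (\<forall>\<kappa>\<in>\<Gamma>. \<forall>a>0. a *\<^sub>R \<kappa> \<in> \<Gamma>) \<and>
     (\<forall>\<kappa>\<in>\<Gamma>. \<forall>\<pi>. \<pi> permutes (UNIV :: 'n set) \<longrightarrow> (\<chi> i. \<kappa> $ \<pi> i) \<in> \<Gamma>) \<and>
     pos_cone \<subseteq> \<Gamma>"

definition admissible_F :: "(real^'n) set \<Rightarrow> (real^'n \<Rightarrow> real) \<Rightarrow> bool" where
  "admissible_F \<Gamma> F \<longleftrightarrow> admissible_cone \<Gamma> \<and>
     smooth_on \<Gamma> F \<and> continuous_on (closure \<Gamma>) F \<and>
     (\<forall>\<kappa>\<in>\<Gamma>. \<forall>\<pi>. \<pi> permutes (UNIV :: 'n set) \<longrightarrow> F (\<chi> i. \<kappa> $ \<pi> i) = F \<kappa>) \<and>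
     (\<forall>\<kappa>\<in>\<Gamma>. \<forall>i. dd F \<kappa> (axis i 1) > 0) \<and>
     concave_on \<Gamma> F \<and>
     (\<forall>\<kappa>\<in>\<Gamma>. \<forall>a>0. F (a *\<^sub>R \<kappa>) = a * F \<kappa>) \<and>
     (\<forall>\<kappa>\<in>\<Gamma>. F \<kappa> > 0) \<and> (\<forall>\<kappa>\<in>frontier \<Gamma>. F \<kappa> = 0) \<and>
     F (\<chi> i. 1) = real CARD('n)"

definition time_int :: "ereal \<Rightarrow> real set" where
  "time_int T = {t. 0 \<le> t \<and> ereal t < T}"

text \<open>u t x (x in S^n) is the radial function of M_t; the leaves are smooth in (t,x), F-admissible,
  and move with normal velocity F^(-p) in the outward normal direction.\<close>
definition flow_solution ::
  "(real^'n) set \<Rightarrow> (real^'n \<Rightarrow> real) \<Rightarrow> real \<Rightarrow> (real \<Rightarrow> real^'m \<Rightarrow> real) \<Rightarrow> ereal \<Rightarrow> bool" where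
  "flow_solution \<Gamma> F p u T \<longleftrightarrow>
     smooth_on_set (time_int T \<times> (UNIV - {0})) (\<lambda>(t, y). u t (y /\<^sub>R norm y)) \<and>
     (\<forall>t\<in>time_int T. \<forall>x\<in>sphere_n.
        u t x > 0 \<and>
        (\<exists>N. outer_normal (u t) x N) \<and>
        (\<forall>N. outer_normal (u t) x N \<longrightarrow>
           (\<exists>\<kappa>::real^'n. principal_curvatures (u t) x N \<kappa>) \<and>
           (\<forall>\<kappa>. principal_curvatures (u t) x N \<kappa> \<longrightarrow>
              \<kappa> \<in> \<Gamma> \<and>
              mink (vector_derivative (\<lambda>s. gpos (u s) x) (at t within time_int T)) N
                = F \<kappa> powr (- p))))"

definition maximal_flow_solution ::
  "(real^'n) set \<Rightarrow> (real^'n \<Rightarrow> real) \<Rightarrow> real \<Rightarrow> (real \<Rightarrow> real^'m \<Rightarrow> real) \<Rightarrow> ereal \<Rightarrow> bool" where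
  "maximal_flow_solution \<Gamma> F p u T \<longleftrightarrow> T > 0 \<and> flow_solution \<Gamma> F p u T \<and>
     \<not> (\<exists>T' u'. T' > T \<and> flow_solution \<Gamma> F p u' T' \<and>
          (\<forall>t\<in>time_int T. \<forall>x\<in>sphere_n. u' t x = u t x))"

end

theory Submission
  imports Defs
begin

text \<open>The radius \<open>u\<close> of the leaves is compared, at its spatial extrema, with the radius of
  geodesic spheres, which moves by \<open>r' = (n coth r)\<^sup>-\<^sup>p\<close>. At a spatial maximum (minimum) of
  \<open>u t\<close> the outer normal is radial, so \<open>\<partial>\<^sub>t u = F(\<kappa>)\<^sup>-\<^sup>p\<close>, and every principal curvature is at
  least (at most) \<open>coth u\<close>; monotonicity and homogeneity of \<open>F\<close> give
  \<open>\<partial>\<^sub>t u \<le> (n coth u)\<^sup>-\<^sup>p\<close> (resp. \<open>\<ge>\<close>). A maximum principle then yields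
  \<open>u \<le> A + t/n\<^sup>p\<close>, a positive lower bound \<open>r0\<close>, and \<open>u \<ge> B + t/n\<^sup>p\<close>, the last one
  applied to the gauge \<open>u + C (ln (sinh u) - u)\<close> instead of \<open>u\<close>.
  Both estimates follow, as \<open>sinh u \<sim> e\<^sup>u\<close> and \<open>coth u - 1 \<sim> e\<^sup>-\<^sup>2\<^sup>u\<close> for \<open>u \<ge> r0\<close>.\<close>

section \<open>Calculus\<close>

abbreviation coth :: "real \<Rightarrow> real" where
  "coth r \<equiv> cosh r / sinh r"

lemma smooth_on_line_derivative:
  fixes g :: "'a::euclidean_space \<Rightarrow> real"
  assumes "smooth_on S g" "z + s *\<^sub>R w \<in> S"
  shows "((\<lambda>r. ddn vs g (z + r *\<^sub>R w)) has_real_derivative ddn (w # vs) g (z + s *\<^sub>R w)) (at s)"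
proof -
  let ?y = "z + s *\<^sub>R w"
  have "(\<lambda>r. ddn vs g (?y + r *\<^sub>R w)) differentiable (at 0)"
    using assms unfolding smooth_on_def by blast
  then have "((\<lambda>r. ddn vs g (?y + r *\<^sub>R w)) has_real_derivative ddn (w # vs) g ?y) (at 0)"
    by (simp add: dd_def has_real_derivative_iff_has_vector_derivative vector_derivative_works)
  then have "((\<lambda>r. ddn vs g (z + (r + s) *\<^sub>R w)) has_real_derivative ddn (w # vs) g ?y) (at 0)"
    by (simp add: algebra_simps)
  then show ?thesis
    using DERIV_shift[of "\<lambda>r. ddn vs g (z + r *\<^sub>R w)" _ 0 s] by simp
qed

lemma DERIV_global_max_second_order:
  fixes h h1 :: "real \<Rightarrow> real"
  assumes hd: "\<And>s. (h has_real_derivative h1 s) (at s)"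
    and h1d: "(h1 has_real_derivative h2) (at 0)"
    and max: "\<And>s. h s \<le> h 0"
  shows "h1 0 = 0" and "h2 \<le> 0"
proof -
  show crit: "h1 0 = 0"
    by (rule DERIV_local_max[OF hd[of 0], of 1]) (use max in auto)
  show "h2 \<le> 0"
  proof (rule ccontr)
    assume "\<not> h2 \<le> 0"
    then obtain d where "d > 0" and inc: "\<And>e. 0 < e \<Longrightarrow> e < d \<Longrightarrow> h1 0 < h1 e"
      using DERIV_pos_inc_right[OF h1d] by force
    have "continuous_on {0..d/2} h"
      using hd by (meson DERIV_isCont continuous_at_imp_continuous_on)
    then have "h 0 < h (d/2)"
      by (rule DERIV_pos_imp_increasing_open[rotated 2]) (use \<open>d > 0\<close> hd inc crit in force)+
    then show False using max[of "d/2"] by simp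
  qed
qed

lemma DERIV_global_min_second_order:
  fixes h h1 :: "real \<Rightarrow> real"
  assumes hd: "\<And>s. (h has_real_derivative h1 s) (at s)"
    and h1d: "(h1 has_real_derivative h2) (at 0)"
    and min: "\<And>s. h 0 \<le> h s"
  shows "h1 0 = 0" and "h2 \<ge> 0"
  using DERIV_global_max_second_order[of "\<lambda>s. - h s" "\<lambda>s. - h1 s" "- h2"]
  by (auto intro!: derivative_eq_intros hd h1d min)

lemma norm_unit_add_orthogonal:
  fixes x v :: "'a::real_inner"
  assumes "norm x = 1" "v \<bullet> x = 0"
  shows "norm (x + s *\<^sub>R v) = sqrt (1 + (v \<bullet> v) * s\<^sup>2)"
proof -
  have "(norm (x + s *\<^sub>R v))\<^sup>2 = (x + s *\<^sub>R v) \<bullet> (x + s *\<^sub>R v)"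
    by (simp add: power2_norm_eq_inner)
  also have "\<dots> = x \<bullet> x + 2 * s * (v \<bullet> x) + s\<^sup>2 * (v \<bullet> v)"
    by (simp add: inner_add_left inner_add_right inner_commute power2_eq_square algebra_simps)
  also have "\<dots> = 1 + (v \<bullet> v) * s\<^sup>2"
    using assms by (simp add: norm_eq_1)
  finally show ?thesis by (metis norm_ge_zero real_sqrt_unique)
qed

section \<open>Radial graphs in the hyperboloid model\<close>

lemma sphere_n_eq_sphere: "sphere_n = sphere 0 1"
  unfolding sphere_n_def by auto

lemma compact_sphere_n: "compact (sphere_n :: (real^'m) set)"
  unfolding sphere_n_eq_sphere by simp

lemma sphere_n_nonempty: "(sphere_n :: (real^'m) set) \<noteq> {}"
  unfolding sphere_n_eq_sphere by simp

lemma curve_in_sphere_n: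
  assumes "x \<in> sphere_n" "v \<in> tang x"
  shows "(x + s *\<^sub>R v) /\<^sub>R norm (x + s *\<^sub>R v) \<in> sphere_n"
proof -
  have "(x + s *\<^sub>R v) \<bullet> x = 1"
    using assms unfolding sphere_n_def tang_def by (simp add: inner_add_left norm_eq_1)
  then have "x + s *\<^sub>R v \<noteq> 0" by auto
  then show ?thesis unfolding sphere_n_def by simp
qed

lemma line_has_vector_derivative:
  "((\<lambda>s. x + s *\<^sub>R v) has_vector_derivative v) (at s)"
  by (rule derivative_eq_intros | simp)+

lemma hyperboloid_curve_first_derivative:
  fixes h h1 \<rho> \<rho>1 :: "real \<Rightarrow> real" and x v :: "'b::real_normed_vector"
  assumes hd: "\<And>s. (h has_real_derivative h1 s) (at s)"
    and rd: "\<And>s. (\<rho> has_real_derivative \<rho>1 s) (at s)"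
  shows "((\<lambda>s. (cosh (h s), (sinh (h s) * \<rho> s) *\<^sub>R (x + s *\<^sub>R v))) has_vector_derivative
     (sinh (h s) * h1 s, (cosh (h s) * h1 s * \<rho> s + sinh (h s) * \<rho>1 s) *\<^sub>R (x + s *\<^sub>R v)
        + (sinh (h s) * \<rho> s) *\<^sub>R v)) (at s)"
proof -
  have "((\<lambda>s. cosh (h s)) has_vector_derivative sinh (h s) * h1 s) (at s)"
    unfolding has_real_derivative_iff_has_vector_derivative[symmetric]
    by (rule derivative_eq_intros hd | simp)+
  moreover have "((\<lambda>s. sinh (h s) * \<rho> s) has_real_derivative
      cosh (h s) * h1 s * \<rho> s + sinh (h s) * \<rho>1 s) (at s)"
    by (rule derivative_eq_intros hd rd | simp)+
  then have "((\<lambda>s. (sinh (h s) * \<rho> s) *\<^sub>R (x + s *\<^sub>R v)) has_vector_derivative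
      (sinh (h s) * \<rho> s) *\<^sub>R v + (cosh (h s) * h1 s * \<rho> s + sinh (h s) * \<rho>1 s) *\<^sub>R (x + s *\<^sub>R v)) (at s)"
    using has_vector_derivative_scaleR[OF _ line_has_vector_derivative] by blast
  ultimately show ?thesis
    using has_vector_derivative_Pair by (simp add: add.commute)
qed

lemma hyperboloid_curve_second_derivative:
  fixes h h1 \<rho> \<rho>1 :: "real \<Rightarrow> real" and x v :: "'b::real_normed_vector"
  assumes hd: "\<And>s. (h has_real_derivative h1 s) (at s)"
    and h1d: "(h1 has_real_derivative h2) (at 0)"
    and rd: "\<And>s. (\<rho> has_real_derivative \<rho>1 s) (at s)"
    and r1d: "(\<rho>1 has_real_derivative \<rho>2) (at 0)"
    and h10: "h1 0 = 0" and r0: "\<rho> 0 = 1" and r10: "\<rho>1 0 = 0"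
  shows "((\<lambda>s. (sinh (h s) * h1 s, (cosh (h s) * h1 s * \<rho> s + sinh (h s) * \<rho>1 s) *\<^sub>R (x + s *\<^sub>R v)
        + (sinh (h s) * \<rho> s) *\<^sub>R v)) has_vector_derivative
     (sinh (h 0) * h2, (cosh (h 0) * h2 + sinh (h 0) * \<rho>2) *\<^sub>R x)) (at 0)"
proof -
  have hd0: "(h has_real_derivative 0) (at 0)" and rd0: "(\<rho> has_real_derivative 0) (at 0)"
    using hd[of 0] rd[of 0] h10 r10 by simp_all
  have "((\<lambda>s. sinh (h s) * h1 s) has_vector_derivative sinh (h 0) * h2) (at 0)"
    unfolding has_real_derivative_iff_has_vector_derivative[symmetric]
    by (rule derivative_eq_intros hd0 h1d | simp add: h10)+
  moreover
  have "((\<lambda>s. cosh (h s) * h1 s * \<rho> s + sinh (h s) * \<rho>1 s) has_real_derivative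
      cosh (h 0) * h2 + sinh (h 0) * \<rho>2) (at 0)"
    by (rule derivative_eq_intros hd0 h1d rd0 r1d | simp add: h10 r0 r10)+
  then have "((\<lambda>s. (cosh (h s) * h1 s * \<rho> s + sinh (h s) * \<rho>1 s) *\<^sub>R (x + s *\<^sub>R v))
      has_vector_derivative (cosh (h 0) * h2 + sinh (h 0) * \<rho>2) *\<^sub>R x) (at 0)"
    using has_vector_derivative_scaleR[OF _ line_has_vector_derivative[of x v 0]] h10 r10
    by fastforce
  moreover
  have "((\<lambda>s. sinh (h s) * \<rho> s) has_real_derivative 0) (at 0)"
    by (rule derivative_eq_intros hd0 rd0 | simp)+
  then have "((\<lambda>s. (sinh (h s) * \<rho> s) *\<^sub>R v) has_vector_derivative 0) (at 0)"
    using has_vector_derivative_scaleR[OF _ has_vector_derivative_const[of v]] by fastforce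
  ultimately show ?thesis
    using has_vector_derivative_Pair[OF _ has_vector_derivative_add] by fastforce
qed

text \<open>The factor \<open>\<rho> s = |x + s v|\<^sup>-\<^sup>1\<close> of the radial projection contributes the term
  \<open>- (v \<bullet> v) sinh (w x)\<close> to the second derivative.\<close>
lemma gpos_derivatives_at_critical_point:
  fixes w :: "real^'m \<Rightarrow> real" and x v :: "real^'m" and h h1 :: "real \<Rightarrow> real"
  assumes x: "norm x = 1" and v: "v \<bullet> x = 0"
    and hw: "\<And>s. h s = w ((x + s *\<^sub>R v) /\<^sub>R norm (x + s *\<^sub>R v))"
    and hd: "\<And>s. (h has_real_derivative h1 s) (at s)"
    and h1d: "(h1 has_real_derivative h2) (at 0)"
    and crit: "h1 0 = 0"
  shows "dd (gpos w) x v = (0, sinh (w x) *\<^sub>R v)"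
    and "dd (\<lambda>y. dd (gpos w) y v) x v =
           (sinh (w x) * h2, (cosh (w x) * h2 - (v \<bullet> v) * sinh (w x)) *\<^sub>R x)"
proof -
  define a where "a = v \<bullet> v"
  have a: "a \<ge> 0" and pos: "\<And>s. 0 < 1 + a * s\<^sup>2"
    unfolding a_def by (simp_all add: add_pos_nonneg)
  define \<rho> where "\<rho> s = (1 + a * s\<^sup>2) powr (-1/2)" for s
  define \<rho>1 where "\<rho>1 s = - a * s * (1 + a * s\<^sup>2) powr (-3/2)" for s
  have rd: "(\<rho> has_real_derivative \<rho>1 s) (at s)" for s
    unfolding \<rho>_def \<rho>1_def by (rule derivative_eq_intros refl | simp add: pos)+
  have r1d: "(\<rho>1 has_real_derivative (-a)) (at 0)"
    unfolding \<rho>1_def by (rule derivative_eq_intros refl | simp)+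
  have r0: "\<rho> 0 = 1" and r10: "\<rho>1 0 = 0" unfolding \<rho>_def \<rho>1_def by simp_all
  have hx: "h 0 = w x" using hw[of 0] x by simp
  have curve: "gpos w (x + s *\<^sub>R v) = (cosh (h s), (sinh (h s) * \<rho> s) *\<^sub>R (x + s *\<^sub>R v))" for s
  proof -
    have "inverse (norm (x + s *\<^sub>R v)) = \<rho> s"
      using norm_unit_add_orthogonal[OF x v, of s] pos[of s]
      by (simp add: \<rho>_def a_def powr_minus powr_half_sqrt)
    then show ?thesis unfolding gpos_def hw[of s] by (simp add: divide_inverse_commute)
  qed
  define G1 where "G1 s = (sinh (h s) * h1 s, (cosh (h s) * h1 s * \<rho> s + sinh (h s) * \<rho>1 s) *\<^sub>R (x + s *\<^sub>R v)
        + (sinh (h s) * \<rho> s) *\<^sub>R v)" for s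
  have dd1: "dd (gpos w) (x + s *\<^sub>R v) v = G1 s" for s
  proof -
    have "((\<lambda>s. gpos w (x + s *\<^sub>R v)) has_vector_derivative G1 s) (at s)" for s
      unfolding curve G1_def by (rule hyperboloid_curve_first_derivative[OF hd rd])
    then have "((\<lambda>s. gpos w (x + s *\<^sub>R v)) \<circ> (\<lambda>r. s + r) has_vector_derivative 1 *\<^sub>R G1 s) (at 0)"
      by (intro vector_diff_chain_at) (auto intro!: derivative_eq_intros)
    then have "((\<lambda>r. gpos w (x + s *\<^sub>R v + r *\<^sub>R v)) has_vector_derivative G1 s) (at 0)"
      by (simp add: o_def scaleR_add_left add.assoc)
    then show ?thesis unfolding dd_def by (rule vector_derivative_at)
  qed
  show "dd (gpos w) x v = (0, sinh (w x) *\<^sub>R v)"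
    using dd1[of 0] by (simp add: G1_def crit r0 r10 hx)
  have "(G1 has_vector_derivative (sinh (h 0) * h2, (cosh (h 0) * h2 + sinh (h 0) * (-a)) *\<^sub>R x)) (at 0)"
    unfolding G1_def by (rule hyperboloid_curve_second_derivative[OF hd h1d rd r1d crit r0 r10])
  moreover have "(\<lambda>s. dd (gpos w) (x + s *\<^sub>R v) v) = G1" using dd1 by auto
  ultimately show "dd (\<lambda>y. dd (gpos w) y v) x v =
      (sinh (w x) * h2, (cosh (w x) * h2 - (v \<bullet> v) * sinh (w x)) *\<^sub>R x)"
    unfolding dd_def[of "\<lambda>y. dd (gpos w) y v"]
    by (simp add: vector_derivative_at hx a_def algebra_simps)
qed

lemma outer_normal_at_critical_point:
  fixes w :: "real^'m \<Rightarrow> real"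
  assumes x: "norm x = 1" and pos: "w x > 0"
    and tangent: "\<And>v. v \<in> tang x \<Longrightarrow> dd (gpos w) x v = (0, sinh (w x) *\<^sub>R v)"
    and N: "outer_normal w x N"
  shows "N = radial w x"
proof -
  obtain a b where N_ab: "N = (a, b)" by (cases N)
  define U where "U = w x"
  define \<beta> where "\<beta> = b \<bullet> x"
  have sU: "sinh U > 0" and cU: "cosh U > 0" and hyp: "cosh U ^ 2 - sinh U ^ 2 = 1"
    using pos by (simp_all add: U_def cosh_square_eq)
  have xx: "x \<bullet> x = 1" using x by (simp add: norm_eq_1)
  have "gpos w x = (cosh U, sinh U *\<^sub>R x)" unfolding gpos_def U_def using x by simp
  then have unit: "- a * a + b \<bullet> b = 1" and orth: "- a * cosh U + sinh U * \<beta> = 0"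
    and outward: "- a * sinh U + cosh U * \<beta> > 0"
    using N N_ab unfolding outer_normal_def mink_def radial_def U_def \<beta>_def by simp_all
  txt \<open>The tangential part of \<open>b\<close> is orthogonal to \<open>b\<close> itself, hence vanishes.\<close>
  define v where "v = b - \<beta> *\<^sub>R x"
  have v: "v \<in> tang x" unfolding tang_def v_def \<beta>_def using xx by (simp add: inner_diff_left)
  have "mink N (dd (gpos w) x v) = 0" using N v unfolding outer_normal_def by blast
  then have "sinh U * (b \<bullet> v) = 0" using tangent[OF v] N_ab unfolding mink_def U_def by simp
  then have "b \<bullet> v = 0" using sU by simp
  then have bb: "b \<bullet> b = \<beta>\<^sup>2" and "v \<bullet> v = 0"
    unfolding v_def \<beta>_def using xx
    by (simp_all add: inner_diff_left inner_diff_right inner_commute power2_eq_square)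
  then have b: "b = \<beta> *\<^sub>R x" unfolding v_def by simp
  have a: "a = \<beta> * sinh U / cosh U" using orth cU by (simp add: field_simps)
  have "\<beta>\<^sup>2 * (cosh U ^ 2 - sinh U ^ 2) = cosh U ^ 2"
    using unit bb a cU by (simp add: field_simps power2_eq_square)
  then have "\<beta>\<^sup>2 = cosh U ^ 2" using hyp by simp
  moreover have "\<beta> > 0"
  proof -
    have "- a * sinh U + cosh U * \<beta> = \<beta> * (cosh U ^ 2 - sinh U ^ 2) / cosh U"
      using a cU by (simp add: field_simps power2_eq_square)
    then show ?thesis using outward hyp cU by (simp add: zero_less_divide_iff)
  qed
  ultimately have "\<beta> = cosh U" using cU by (metis power2_eq_iff_nonneg less_imp_le)
  then show ?thesis using N_ab a b cU unfolding radial_def U_def by simp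
qed

text \<open>The property \<open>P\<close> of the second derivatives of \<open>w\<close> along great circles (their sign
  at a maximum or minimum) is passed on to the principal curvatures, which differ from
  \<open>coth (w x)\<close>, the curvature of the geodesic sphere of radius \<open>w x\<close>, by these derivatives.\<close>
lemma principal_curvatures_at_critical_point:
  fixes w :: "real^'m \<Rightarrow> real" and \<kappa> :: "real^'n"
  assumes x: "x \<in> sphere_n" and pos: "w x > 0"
    and crit: "\<And>v. v \<in> tang x \<Longrightarrow> \<exists>h1 h2.
        (\<forall>s. ((\<lambda>s. w ((x + s *\<^sub>R v) /\<^sub>R norm (x + s *\<^sub>R v))) has_real_derivative h1 s) (at s)) \<and>
        (h1 has_real_derivative h2) (at 0) \<and> h1 0 = 0 \<and> P h2"
    and N: "outer_normal w x N" and pc: "principal_curvatures w x N \<kappa>"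
  shows "N = radial w x" and "\<exists>h2. P h2 \<and> \<kappa> $ i = coth (w x) - h2"
proof -
  define U where "U = w x"
  have nx: "norm x = 1" using x unfolding sphere_n_def by simp
  have xx: "x \<bullet> x = 1" using nx by (simp add: norm_eq_1)
  have sU: "sinh U > 0" and hyp: "cosh U ^ 2 - sinh U ^ 2 = 1"
    using pos by (simp_all add: U_def cosh_square_eq)
  have derivs: "\<exists>h2. P h2 \<and> dd (gpos w) x v = (0, sinh U *\<^sub>R v) \<and>
      dd (\<lambda>y. dd (gpos w) y v) x v = (sinh U * h2, (cosh U * h2 - (v \<bullet> v) * sinh U) *\<^sub>R x)"
    if v: "v \<in> tang x" for v
  proof -
    obtain h1 h2 where
      hd: "\<forall>s. ((\<lambda>s. w ((x + s *\<^sub>R v) /\<^sub>R norm (x + s *\<^sub>R v))) has_real_derivative h1 s) (at s)"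
      and h1d: "(h1 has_real_derivative h2) (at 0)" and "h1 0 = 0" "P h2"
      using crit[OF v] by blast
    moreover have "v \<bullet> x = 0" using v unfolding tang_def by simp
    ultimately show ?thesis
      using gpos_derivatives_at_critical_point[OF nx _ refl _ h1d] hd unfolding U_def by blast
  qed
  show normal: "N = radial w x"
    by (rule outer_normal_at_critical_point[OF nx pos _ N]) (use derivs U_def in blast)
  obtain e :: "'n \<Rightarrow> real^'m" where e: "\<And>i. e i \<in> tang x"
    and e_unit: "\<And>i. gmet w x (e i) (e i) = 1"
    and e_curv: "\<And>i. sff w x N (e i) (e i) = \<kappa> $ i"
    using pc unfolding principal_curvatures_def by (metis (full_types))
  obtain h2 where "P h2" and d1: "dd (gpos w) x (e i) = (0, sinh U *\<^sub>R e i)"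
    and d2: "dd (\<lambda>y. dd (gpos w) y (e i)) x (e i) =
      (sinh U * h2, (cosh U * h2 - (e i \<bullet> e i) * sinh U) *\<^sub>R x)"
    using derivs[OF e] by blast
  have "1 = (sinh U)\<^sup>2 * (e i \<bullet> e i)"
    using e_unit[of i] unfolding gmet_def mink_def d1 by (simp add: power2_eq_square)
  then have ee: "e i \<bullet> e i = 1 / (sinh U)\<^sup>2" using sU by (simp add: field_simps)
  have "\<kappa> $ i = - (- (sinh U * h2) * sinh U + cosh U * (cosh U * h2 - (e i \<bullet> e i) * sinh U))"
    using e_curv[of i] unfolding sff_def d2 normal radial_def mink_def U_def
    using xx by (simp add: algebra_simps)
  also have "\<dots> = - h2 * (cosh U ^ 2 - sinh U ^ 2) + (e i \<bullet> e i) * sinh U * cosh U"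
    by (simp add: algebra_simps power2_eq_square)
  also have "\<dots> = coth U - h2"
    unfolding ee hyp using sU by (simp add: field_simps power2_eq_square)
  finally show "\<exists>h2. P h2 \<and> \<kappa> $ i = coth (w x) - h2" using \<open>P h2\<close> U_def by blast
qed

section \<open>The curvature function\<close>

lemma admissible_cone_add_nonneg:
  fixes \<Gamma> :: "(real^'n) set"
  assumes \<Gamma>: "admissible_cone \<Gamma>" and \<kappa>: "\<kappa> \<in> \<Gamma>" and w: "\<And>i. w $ i \<ge> 0"
  shows "\<kappa> + w \<in> \<Gamma>"
proof -
  have "open \<Gamma>" and cvx: "convex \<Gamma>" and cone: "\<And>k a. k \<in> \<Gamma> \<Longrightarrow> a > 0 \<Longrightarrow> a *\<^sub>R k \<in> \<Gamma>"
    and pos: "pos_cone \<subseteq> \<Gamma>" using \<Gamma> unfolding admissible_cone_def by auto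
  then obtain \<delta> where "\<delta> > 0" "ball \<kappa> \<delta> \<subseteq> \<Gamma>" using \<kappa> open_contains_ball by blast
  define c :: "real^'n" where "c = (\<chi> i. \<delta> / (2 * real CARD('n)))"
  have "norm c \<le> (\<Sum>i\<in>UNIV. \<bar>c $ i\<bar>)" by (rule norm_le_l1_cart)
  also have "\<dots> = \<delta> / 2" unfolding c_def using \<open>\<delta> > 0\<close> by simp
  finally have "\<kappa> - c \<in> \<Gamma>" using \<open>\<delta> > 0\<close> \<open>ball \<kappa> \<delta> \<subseteq> \<Gamma>\<close> by (auto simp: dist_norm)
  moreover have "w + c \<in> \<Gamma>"
    using pos w \<open>\<delta> > 0\<close> unfolding pos_cone_def c_def by (auto simp: add_nonneg_pos)
  ultimately have "(1/2) *\<^sub>R (\<kappa> - c) + (1 - 1/2) *\<^sub>R (w + c) \<in> \<Gamma>"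
    by (intro convexD[OF cvx]) auto
  from cone[OF this, of 2] show ?thesis by (simp add: algebra_simps)
qed

lemma admissible_F_mono_axis:
  fixes F :: "real^'n \<Rightarrow> real"
  assumes F: "admissible_F \<Gamma> F" and \<kappa>: "\<kappa> \<in> \<Gamma>" and c: "c \<ge> 0"
  shows "F \<kappa> \<le> F (\<kappa> + c *\<^sub>R axis i 1)"
proof -
  have \<Gamma>: "admissible_cone \<Gamma>" and smooth: "smooth_on \<Gamma> F"
    and incr: "\<And>k. k \<in> \<Gamma> \<Longrightarrow> dd F k (axis i 1) > 0"
    using F unfolding admissible_F_def by auto
  have on_ray: "\<kappa> + s *\<^sub>R axis i 1 \<in> \<Gamma>" if "s \<ge> 0" for s
    by (rule admissible_cone_add_nonneg[OF \<Gamma> \<kappa>]) (use that in \<open>simp add: axis_def\<close>)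
  have "F (\<kappa> + 0 *\<^sub>R axis i 1) \<le> F (\<kappa> + c *\<^sub>R axis i 1)"
  proof (rule DERIV_nonneg_imp_nondecreasing[OF c])
    fix s :: real assume "0 \<le> s" "s \<le> c"
    then show "\<exists>y. ((\<lambda>s. F (\<kappa> + s *\<^sub>R axis i 1)) has_real_derivative y) (at s) \<and> 0 \<le> y"
      using smooth_on_line_derivative[OF smooth on_ray, of s "[]"] incr[OF on_ray]
      by (fastforce intro: less_imp_le)
  qed
  then show ?thesis by simp
qed

lemma admissible_F_mono:
  fixes F :: "real^'n \<Rightarrow> real"
  assumes F: "admissible_F \<Gamma> F" and \<kappa>: "\<kappa> \<in> \<Gamma>" and le: "\<And>i. \<kappa> $ i \<le> \<kappa>' $ i"
  shows "F \<kappa> \<le> F \<kappa>'"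
proof -
  have \<Gamma>: "admissible_cone \<Gamma>" using F unfolding admissible_F_def by auto
  define part where "part A = \<kappa> + (\<chi> i. if i \<in> A then \<kappa>' $ i - \<kappa> $ i else 0)" for A
  have "F \<kappa> \<le> F (part A)" if "finite A" for A
    using that
  proof (induction A rule: finite_induct)
    case empty
    have "part {} = \<kappa>" by (simp add: part_def vec_eq_iff)
    then show ?case by simp
  next
    case (insert a A)
    have "part A \<in> \<Gamma>"
      unfolding part_def by (rule admissible_cone_add_nonneg[OF \<Gamma> \<kappa>]) (simp add: le)
    then have "F (part A) \<le> F (part A + (\<kappa>' $ a - \<kappa> $ a) *\<^sub>R axis a 1)"
      using admissible_F_mono_axis[OF F] le[of a] by simp
    also have "part A + (\<kappa>' $ a - \<kappa> $ a) *\<^sub>R axis a 1 = part (insert a A)"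
      using insert.hyps(2) by (auto simp: part_def vec_eq_iff axis_def)
    finally show ?case using insert.IH by simp
  qed
  moreover have "part UNIV = \<kappa>'" by (simp add: part_def vec_eq_iff)
  ultimately show ?thesis by (metis finite_class.finite_UNIV)
qed

lemma admissible_F_const:
  fixes F :: "real^'n \<Rightarrow> real"
  assumes F: "admissible_F \<Gamma> F" and L: "L > 0"
  shows "F (\<chi> i. L) = real CARD('n) * L"
proof -
  have "(\<chi> i. 1) \<in> \<Gamma>"
    using F unfolding admissible_F_def admissible_cone_def pos_cone_def by auto
  then have "F (L *\<^sub>R (\<chi> i. 1)) = L * F (\<chi> i. 1)"
    using F L unfolding admissible_F_def by blast
  then have "F (L *\<^sub>R (\<chi> i. 1)) = L * real CARD('n)"
    using F unfolding admissible_F_def by simp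
  moreover have "L *\<^sub>R (\<chi> i. 1) = (\<chi> i. L)" by (simp add: vec_eq_iff)
  ultimately show ?thesis by (metis mult.commute)
qed

lemma admissible_F_ge_const:
  fixes F :: "real^'n \<Rightarrow> real"
  assumes F: "admissible_F \<Gamma> F" and L: "0 < L" and le: "\<And>i. L \<le> \<kappa> $ i"
  shows "real CARD('n) * L \<le> F \<kappa>"
proof -
  have "(\<chi> i. L) \<in> \<Gamma>"
    using F L unfolding admissible_F_def admissible_cone_def pos_cone_def by auto
  then show ?thesis using admissible_F_mono[OF F _ ] admissible_F_const[OF F L] le by fastforce
qed

lemma admissible_F_le_const:
  fixes F :: "real^'n \<Rightarrow> real"
  assumes F: "admissible_F \<Gamma> F" and \<kappa>: "\<kappa> \<in> \<Gamma>" and L: "0 < L" and le: "\<And>i. \<kappa> $ i \<le> L"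
  shows "F \<kappa> \<le> real CARD('n) * L"
  using admissible_F_mono[OF F \<kappa>, of "\<chi> i. L"] admissible_F_const[OF F L] le by simp

section \<open>A maximum principle\<close>

lemma first_nonneg_time:
  fixes \<psi> :: "real \<Rightarrow> 'a::metric_space \<Rightarrow> real"
  assumes K: "compact K"
    and cont: "continuous_on ({0..t} \<times> K) (\<lambda>z. \<psi> (fst z) (snd z))"
    and init: "\<And>y. y \<in> K \<Longrightarrow> \<psi> 0 y < 0"
    and x: "x \<in> K" and t: "0 \<le> t" and nonneg: "\<psi> t x \<ge> 0"
  obtains t1 x1 where "0 < t1" "t1 \<le> t" "x1 \<in> K" "\<psi> t1 x1 \<ge> 0"
    "\<And>y. y \<in> K \<Longrightarrow> \<psi> t1 y \<le> \<psi> t1 x1" "\<And>s. 0 \<le> s \<Longrightarrow> s < t1 \<Longrightarrow> \<psi> s x1 < 0"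
proof -
  define Z where "Z = ({0..t} \<times> K) \<inter> (\<lambda>z. \<psi> (fst z) (snd z)) -` {0..}"
  have compact: "compact ({0..t} \<times> K)" using K by (simp add: compact_Times)
  then have "closed Z" unfolding Z_def
    using cont by (intro continuous_closed_preimage) (auto simp: compact_imp_closed)
  then have "compact (({0..t} \<times> K) \<inter> Z)" by (rule compact_Int_closed[OF compact])
  moreover have "({0..t} \<times> K) \<inter> Z = Z" unfolding Z_def by blast
  ultimately have "compact Z" by simp
  moreover have "(t, x) \<in> Z" using t x nonneg unfolding Z_def by auto
  ultimately obtain z where z: "z \<in> Z" and first: "\<And>y. y \<in> Z \<Longrightarrow> fst z \<le> fst y"
    using continuous_attains_inf[of Z fst] continuous_on_fst[OF continuous_on_id] by blast
  define t1 where "t1 = fst z"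
  have t1: "0 \<le> t1" "t1 \<le> t" and "snd z \<in> K" "\<psi> t1 (snd z) \<ge> 0"
    using z unfolding Z_def t1_def by auto
  then have "0 < t1" using init[of "snd z"] by (cases "t1 = 0") auto
  have "continuous_on K (\<lambda>y. \<psi> t1 y)"
    using continuous_on_compose2[OF cont, of K "\<lambda>y. (t1, y)"] t1
    by (force intro!: continuous_intros)
  then obtain x1 where x1: "x1 \<in> K" and max: "\<And>y. y \<in> K \<Longrightarrow> \<psi> t1 y \<le> \<psi> t1 x1"
    using continuous_attains_sup[OF K] x by blast
  have before: "\<psi> s x1 < 0" if "0 \<le> s" "s < t1" for s
    using first[of "(s, x1)"] that t1 x1 unfolding Z_def t1_def by force
  have "\<psi> t1 x1 \<ge> 0" using max[OF \<open>snd z \<in> K\<close>] \<open>\<psi> t1 (snd z) \<ge> 0\<close> by simp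
  from that[OF \<open>0 < t1\<close> t1(2) x1 this max before] show ?thesis .
qed

lemma negative_by_maximum_principle:
  fixes \<psi> :: "real \<Rightarrow> 'a::metric_space \<Rightarrow> real"
  assumes K: "compact K"
    and cont: "continuous_on ({0..t} \<times> K) (\<lambda>z. \<psi> (fst z) (snd z))"
    and init: "\<And>y. y \<in> K \<Longrightarrow> \<psi> 0 y < 0"
    and decr: "\<And>t1 x1. 0 < t1 \<Longrightarrow> t1 \<le> t \<Longrightarrow> x1 \<in> K \<Longrightarrow> (\<forall>y\<in>K. \<psi> t1 y \<le> \<psi> t1 x1) \<Longrightarrow>
        \<exists>D<0. ((\<lambda>s. \<psi> s x1) has_real_derivative D) (at t1 within {0..t1})"
    and x: "x \<in> K" and t: "0 \<le> t"
  shows "\<psi> t x < 0"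
proof (rule ccontr)
  assume "\<not> \<psi> t x < 0"
  then obtain t1 x1 where t1: "0 < t1" "t1 \<le> t" and x1: "x1 \<in> K" and "\<psi> t1 x1 \<ge> 0"
    and max: "\<And>y. y \<in> K \<Longrightarrow> \<psi> t1 y \<le> \<psi> t1 x1"
    and before: "\<And>s. 0 \<le> s \<Longrightarrow> s < t1 \<Longrightarrow> \<psi> s x1 < 0"
    using first_nonneg_time[OF K cont init x t] by (metis not_le)
  obtain D where "D < 0" and "((\<lambda>s. \<psi> s x1) has_real_derivative D) (at t1 within {0..t1})"
    using decr[OF t1 x1] max by blast
  then obtain d where "d > 0"
    and left: "\<And>h. 0 < h \<Longrightarrow> t1 - h \<in> {0..t1} \<Longrightarrow> h < d \<Longrightarrow> \<psi> t1 x1 < \<psi> (t1 - h) x1"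
    using has_real_derivative_neg_dec_left by blast
  define h where "h = min d t1 / 2"
  have "0 < h" "h < d" "h \<le> t1" unfolding h_def using \<open>d > 0\<close> t1 by auto
  then have "\<psi> t1 x1 < \<psi> (t1 - h) x1" and "\<psi> (t1 - h) x1 < 0"
    using left before by auto
  with \<open>\<psi> t1 x1 \<ge> 0\<close> show False by simp
qed

section \<open>Comparison functions\<close>

lemma coth_gt_one: "0 < r \<Longrightarrow> 1 < coth r"
  using cosh_minus_sinh[of r] by (simp add: field_simps)

lemma coth_antimono: "0 < r0 \<Longrightarrow> r0 \<le> r \<Longrightarrow> coth r \<le> coth r0"
proof -
  assume r: "0 < r0" "r0 \<le> r"
  have "0 \<le> sinh (r - r0)" using r by simp
  then have "0 \<le> cosh r0 * sinh r - cosh r * sinh r0" by (simp add: sinh_diff algebra_simps)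
  moreover have "sinh r > 0" "sinh r0 > 0" using r by auto
  ultimately show ?thesis by (simp add: field_simps)
qed

lemma powr_neg_mult_less:
  fixes n L p :: real
  assumes "0 < n" "1 < L" "0 < p"
  shows "(n * L) powr (- p) < n powr (- p)"
proof -
  have "n powr (- p) * L powr (- p) < n powr (- p) * 1"
    using assms powr_less_one[of L "- p"] by (intro mult_strict_left_mono) auto
  then show ?thesis using assms by (simp add: powr_mult)
qed

definition radius_gauge :: "real \<Rightarrow> real \<Rightarrow> real" where
  "radius_gauge C r = r + C * (ln (sinh r) - r)"

lemma radius_gauge_has_derivative:
  "0 < r \<Longrightarrow> (radius_gauge C has_real_derivative 1 + C * (coth r - 1)) (at r)"
  unfolding radius_gauge_def by (rule derivative_eq_intros refl | simp)+

lemma radius_gauge_le: "0 < r \<Longrightarrow> 0 \<le> C \<Longrightarrow> radius_gauge C r \<le> r"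
proof -
  assume r: "0 < r" and C: "0 \<le> C"
  have "sinh r < exp r"
    using exp_gt_zero[of r] exp_gt_zero[of "-r"] unfolding sinh_field_def by (simp add: field_simps add_pos_pos)
  then have "ln (sinh r) < ln (exp r)" using r by (subst ln_less_cancel_iff) auto
  then have "ln (sinh r) < r" by simp
  then show ?thesis unfolding radius_gauge_def using C by (simp add: mult_nonneg_nonpos)
qed

lemma radius_gauge_less:
  assumes "0 < a" "a < b" "0 \<le> C"
  shows "radius_gauge C a < radius_gauge C b"
proof (rule DERIV_pos_imp_increasing[OF \<open>a < b\<close>])
  fix r assume "a \<le> r" "r \<le> b"
  then have "0 < r" using assms by simp
  moreover have "0 < 1 + C * (coth r - 1)"
    using coth_gt_one[OF \<open>0 < r\<close>] \<open>0 \<le> C\<close> by (simp add: add_pos_nonneg)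
  ultimately show "\<exists>y. (radius_gauge C has_real_derivative y) (at r) \<and> 0 < y"
    using radius_gauge_has_derivative by blast
qed

lemma radius_gauge_le_iff:
  "0 < a \<Longrightarrow> 0 < b \<Longrightarrow> 0 \<le> C \<Longrightarrow> radius_gauge C a \<le> radius_gauge C b \<longleftrightarrow> a \<le> b"
  using radius_gauge_less[of a b C] radius_gauge_less[of b a C] by (cases a b rule: linorder_cases) auto

lemma coth_powr_less_affine:
  fixes p r0 r :: real
  assumes p: "0 < p" and r: "0 < r0" "r0 \<le> r"
  shows "coth r powr p < 1 + (p * exp (p * (coth r0 - 1)) + 1) * (coth r - 1)"
proof -
  define x where "x = coth r - 1"
  have "0 < r" using r by simp
  then have x: "0 < x" "x \<le> coth r0 - 1"
    using coth_gt_one coth_antimono[OF r] unfolding x_def by simp_all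
  have "coth r powr p = exp (p * ln (1 + x))"
    using x \<open>0 < r\<close> unfolding x_def powr_def by simp
  also have "\<dots> \<le> exp (p * x)" using p x ln_add_one_self_le_self[of x] by simp
  also have "\<dots> \<le> 1 + p * x * exp (p * x)"
  proof -
    have "(1 - p * x) * exp (p * x) \<le> exp (- (p * x)) * exp (p * x)"
      using exp_ge_add_one_self[of "- (p * x)"] by (simp add: mult_right_mono)
    then show ?thesis by (simp add: algebra_simps flip: exp_add)
  qed
  also have "\<dots> \<le> 1 + p * x * exp (p * (coth r0 - 1))"
    using p x by (simp add: mult_left_mono)
  also have "\<dots> < 1 + (p * exp (p * (coth r0 - 1)) + 1) * x" using x by (simp add: algebra_simps)
  finally show ?thesis unfolding x_def .
qed

lemma radius_gauge_rate_gt: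
  fixes n p r0 r D :: real
  assumes n: "0 < n" and p: "0 < p" and r: "0 < r0" "r0 \<le> r"
    and D: "(n * coth r) powr (- p) \<le> D"
  shows "1 / n powr p < (1 + (p * exp (p * (coth r0 - 1)) + 1) * (coth r - 1)) * D"
proof -
  define L where "L = coth r"
  define slope where "slope = 1 + (p * exp (p * (coth r0 - 1)) + 1) * (L - 1)"
  have L: "1 < L" unfolding L_def using r by (intro coth_gt_one) simp
  have "L powr p < slope"
    unfolding slope_def L_def by (rule coth_powr_less_affine[OF p r])
  then have "1 / n powr p < slope * (n * L) powr (- p)"
    using L n by (simp add: powr_mult powr_minus_divide field_simps)
  also have "\<dots> \<le> slope * D"
    using D le_less_trans[OF powr_ge_zero \<open>L powr p < slope\<close>] unfolding L_def
    by (simp add: mult_left_mono)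
  finally show ?thesis unfolding slope_def L_def .
qed

lemma continuous_on_radius_gauge: "continuous_on {0<..} (radius_gauge C)"
  using radius_gauge_has_derivative
  by (meson DERIV_isCont continuous_at_imp_continuous_on greaterThan_iff)

lemma sinh_exp_bounds_of_linear_bounds:
  fixes r0 A B N :: real
  assumes r0: "0 < r0"
  shows "\<exists>c>0. \<forall>t U. r0 \<le> U \<longrightarrow> U \<le> A + t / N \<longrightarrow> B + t / N \<le> U \<longrightarrow>
     1 / c \<le> sinh U * exp (- t / N) \<and> sinh U * exp (- t / N) \<le> c \<and>
     coth U - 1 \<le> c * exp (- (2 / N) * t)"
proof -
  define q where "q = 1 - exp (-2 * r0)"
  define c where "c = max (max (2 / (q * exp B)) (exp A)) (2 * exp (-2 * B) / q)"
  have q: "0 < q" "q \<le> 1" unfolding q_def using r0 by auto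
  have c: "0 < c" unfolding c_def using q by (simp add: less_max_iff_disj)
  have "1 / c \<le> sinh U * exp (- t / N) \<and> sinh U * exp (- t / N) \<le> c \<and>
      coth U - 1 \<le> c * exp (- (2 / N) * t)"
    if U: "r0 \<le> U" and upper: "U \<le> A + t / N" and lower: "B + t / N \<le> U" for t U
  proof (intro conjI)
    have sU: "sinh U > 0" using r0 U by simp
    have "exp (- U) = exp (-2 * U) * exp U" by (simp flip: exp_add)
    also have "\<dots> \<le> exp (-2 * r0) * exp U" using U by simp
    finally have "exp (- U) \<le> exp (-2 * r0) * exp U" .
    moreover have "sinh U - q * exp U / 2 = (exp (-2 * r0) * exp U - exp (- U)) / 2"
      unfolding q_def sinh_field_def by (simp add: field_simps)
    ultimately have sinh_lower: "q * exp U / 2 \<le> sinh U" by simp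
    have "sinh U \<le> exp U"
      unfolding sinh_field_def using exp_gt_zero[of "-U"] exp_gt_zero[of U] by argo
    then have "sinh U * exp (- t / N) \<le> exp U * exp (- t / N)"
      by (simp add: mult_right_mono)
    also have "\<dots> = exp (U - t / N)" by (simp flip: exp_add)
    also have "\<dots> \<le> exp A" using upper by simp
    also have "\<dots> \<le> c" unfolding c_def by simp
    finally show "sinh U * exp (- t / N) \<le> c" .
    have "1 / c \<le> q * exp B / 2"
      using divide_left_mono[of "2 / (q * exp B)" c 1] q c by (simp add: c_def)
    also have "\<dots> \<le> q * exp (U - t / N) / 2" using lower q by simp
    also have "\<dots> = (q * exp U / 2) * exp (- t / N)" by (simp add: exp_diff exp_minus field_simps)
    also have "\<dots> \<le> sinh U * exp (- t / N)" using sinh_lower by simp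
    finally show "1 / c \<le> sinh U * exp (- t / N)" .
    have "coth U - 1 = (cosh U - sinh U) / sinh U"
      using sU by (simp add: diff_divide_distrib)
    also have "\<dots> = exp (- U) / sinh U" by (simp add: cosh_minus_sinh)
    also have "\<dots> \<le> exp (- U) / (q * exp U / 2)"
      by (rule divide_left_mono[OF sinh_lower]) (use q sU in auto)
    also have "\<dots> = 2 * exp (-2 * U) / q" using q by (simp add: field_simps flip: exp_add)
    also have "\<dots> \<le> 2 * exp (-2 * B - (2 / N) * t) / q"
      using lower q by (simp add: divide_right_mono)
    also have "\<dots> = (2 * exp (-2 * B) / q) * exp (- (2 / N) * t)"
      by (simp add: field_simps flip: exp_add)
    also have "\<dots> \<le> c * exp (- (2 / N) * t)" unfolding c_def by (rule mult_right_mono) auto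
    finally show "coth U - 1 \<le> c * exp (- (2 / N) * t)" .
  qed
  with c show ?thesis by blast
qed

section \<open>The flow\<close>

lemma time_int_atLeastAtMost: "t \<in> time_int T \<Longrightarrow> {0..t} \<subseteq> time_int T"
  unfolding time_int_def by (auto intro: le_less_trans[of _ "ereal t"])

locale radial_flow =
  fixes \<Gamma> :: "(real^'n) set" and F :: "real^'n \<Rightarrow> real" and p :: real
    and u :: "real \<Rightarrow> real^'m \<Rightarrow> real" and T :: ereal
  assumes admissible: "admissible_F \<Gamma> F" and p_pos: "0 < p"
    and solution: "flow_solution \<Gamma> F p u T" and T_pos: "0 < T"
begin

lemma zero_in_time_int: "0 \<in> time_int T"
  using T_pos unfolding time_int_def by (simp add: zero_ereal_def)

lemma smooth_extension:
  obtains S g where "time_int T \<times> (UNIV - {0}) \<subseteq> S" "smooth_on S g"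
    "\<And>s y. s \<in> time_int T \<Longrightarrow> y \<noteq> 0 \<Longrightarrow> g (s, y) = u s (y /\<^sub>R norm y)"
  using solution unfolding flow_solution_def smooth_on_set_def by force

lemma radius_pos: "t \<in> time_int T \<Longrightarrow> x \<in> sphere_n \<Longrightarrow> 0 < u t x"
  using solution unfolding flow_solution_def by blast

lemma continuous_on_radius:
  assumes t: "t \<in> time_int T"
  shows "continuous_on ({0..t} \<times> sphere_n) (\<lambda>z. u (fst z) (snd z))"
proof -
  obtain S g where S: "time_int T \<times> (UNIV - {0}) \<subseteq> S" and g: "smooth_on S g"
    and g_eq: "\<And>s y. s \<in> time_int T \<Longrightarrow> y \<noteq> 0 \<Longrightarrow> g (s, y) = u s (y /\<^sub>R norm y)"
    using smooth_extension by blast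
  have sub: "{0..t} \<times> sphere_n \<subseteq> time_int T \<times> (UNIV - {0})"
    using time_int_atLeastAtMost[OF t] unfolding sphere_n_def by auto
  have "continuous_on S g" using g unfolding smooth_on_def by (metis ddn.simps(1))
  then have "continuous_on ({0..t} \<times> sphere_n) g" using S sub by (blast intro: continuous_on_subset)
  then show ?thesis
    by (rule continuous_on_eq) (use sub g_eq in \<open>force simp: sphere_n_def\<close>)
qed

lemma radius_time_derivative:
  assumes t: "t \<in> time_int T" and x: "x \<in> sphere_n"
  obtains D where "((\<lambda>s. u s x) has_real_derivative D) (at t within time_int T)"
proof -
  obtain S g where S: "time_int T \<times> (UNIV - {0}) \<subseteq> S" and g: "smooth_on S g"
    and g_eq: "\<And>s y. s \<in> time_int T \<Longrightarrow> y \<noteq> 0 \<Longrightarrow> g (s, y) = u s (y /\<^sub>R norm y)"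
    using smooth_extension by blast
  have nx: "norm x = 1" using x unfolding sphere_n_def by simp
  then have "x \<noteq> 0" by auto
  then have g_x: "s \<in> time_int T \<Longrightarrow> g (s, x) = u s x" for s using g_eq[of s x] nx by simp
  have "(0, x) + t *\<^sub>R (1, 0) \<in> S" using S t nx by auto
  from smooth_on_line_derivative[OF g this, of "[]"]
  have "((\<lambda>s. g (s, x)) has_real_derivative ddn [(1, 0)] g (t, x)) (at t within time_int T)"
    by (simp add: has_field_derivative_at_within)
  then have "((\<lambda>s. u s x) has_real_derivative ddn [(1, 0)] g (t, x)) (at t within time_int T)"
    by (rule has_field_derivative_transform_within[OF _ zero_less_one t])
      (simp add: g_x)
  then show ?thesis by (rule that)
qed

lemma radius_spatial_derivatives:
  assumes t: "t \<in> time_int T" and x: "x \<in> sphere_n" and v: "v \<in> tang x"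
  obtains h1 h2 where
    "\<And>s. ((\<lambda>s. u t ((x + s *\<^sub>R v) /\<^sub>R norm (x + s *\<^sub>R v))) has_real_derivative h1 s) (at s)"
    "(h1 has_real_derivative h2) (at 0)"
proof -
  obtain S g where S: "time_int T \<times> (UNIV - {0}) \<subseteq> S" and g: "smooth_on S g"
    and g_eq: "\<And>s y. s \<in> time_int T \<Longrightarrow> y \<noteq> 0 \<Longrightarrow> g (s, y) = u s (y /\<^sub>R norm y)"
    using smooth_extension by blast
  have nonzero: "x + s *\<^sub>R v \<noteq> 0" for s
  proof
    assume "x + s *\<^sub>R v = 0"
    then have "(x + s *\<^sub>R v) \<bullet> x = 0" by simp
    then show False using x v by (simp add: inner_add_left sphere_n_def tang_def norm_eq_1)
  qed
  define w where "w = ((0::real), v)"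
  have inS: "(t, x) + s *\<^sub>R w \<in> S" for s using S t nonzero unfolding w_def by auto
  have "((\<lambda>s. u t ((x + s *\<^sub>R v) /\<^sub>R norm (x + s *\<^sub>R v))) has_real_derivative
      ddn [w] g ((t, x) + s *\<^sub>R w)) (at s)" for s
    using smooth_on_line_derivative[OF g inS, of "[]"] g_eq[OF t nonzero] by (simp add: w_def)
  moreover have "((\<lambda>s. ddn [w] g ((t, x) + s *\<^sub>R w)) has_real_derivative ddn [w, w] g (t, x)) (at 0)"
    using smooth_on_line_derivative[OF g inS, of "[w]" 0] by simp
  ultimately show ?thesis by (rule that)
qed

lemma radius_speed_at_critical_point:
  assumes t: "t \<in> time_int T" "0 < t" and x: "x \<in> sphere_n"
    and D: "((\<lambda>s. u s x) has_real_derivative D) (at t within time_int T)"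
    and N: "outer_normal (u t) x N" and radial: "N = radial (u t) x"
    and \<kappa>: "principal_curvatures (u t) x N \<kappa>"
  shows "\<kappa> \<in> \<Gamma>" and "D = F \<kappa> powr (- p)"
proof -
  have speed: "\<kappa> \<in> \<Gamma> \<and> mink (vector_derivative (\<lambda>s. gpos (u s) x) (at t within time_int T)) N
      = F \<kappa> powr (- p)"
    using solution t x N \<kappa> unfolding flow_solution_def by blast
  then show "\<kappa> \<in> \<Gamma>" ..
  have nx: "norm x = 1" using x unfolding sphere_n_def by simp
  have "gpos (u s) x = (cosh (u s x), sinh (u s x) *\<^sub>R x)" for s
    unfolding gpos_def using nx by simp
  moreover have "((\<lambda>s. (cosh (u s x), sinh (u s x) *\<^sub>R x)) has_vector_derivative
      (sinh (u t x) * D, (cosh (u t x) * D) *\<^sub>R x)) (at t within time_int T)"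
    by (intro has_vector_derivative_Pair has_vector_derivative_scaleR[where g'=0, simplified]
        has_real_derivative_iff_has_vector_derivative[THEN iffD1])
      (auto intro!: derivative_eq_intros D)
  moreover have "at t within time_int T \<noteq> bot"
    using islimpt_subset[of t "{0..t}"] time_int_atLeastAtMost[OF t(1)] t(2)
    by (simp add: trivial_limit_within)
  ultimately have "vector_derivative (\<lambda>s. gpos (u s) x) (at t within time_int T) =
      (sinh (u t x) * D, (cosh (u t x) * D) *\<^sub>R x)"
    by (simp add: vector_derivative_within)
  then have "mink (vector_derivative (\<lambda>s. gpos (u s) x) (at t within time_int T)) N =
      D * (cosh (u t x) ^ 2 - sinh (u t x) ^ 2)"
    using nx unfolding radial radial_def mink_def
    by (simp add: algebra_simps power2_eq_square norm_eq_1)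
  then show "D = F \<kappa> powr (- p)" using speed by (simp add: cosh_square_eq)
qed

lemma radius_speed_at_extremum:
  assumes t: "t \<in> time_int T" "0 < t" and x: "x \<in> sphere_n"
    and crit: "\<And>v. v \<in> tang x \<Longrightarrow> \<exists>h1 h2.
        (\<forall>s. ((\<lambda>s. u t ((x + s *\<^sub>R v) /\<^sub>R norm (x + s *\<^sub>R v))) has_real_derivative h1 s) (at s)) \<and>
        (h1 has_real_derivative h2) (at 0) \<and> h1 0 = 0 \<and> P h2"
  obtains D \<kappa> where "((\<lambda>s. u s x) has_real_derivative D) (at t within time_int T)"
    "\<kappa> \<in> \<Gamma>" "D = F \<kappa> powr (- p)" "\<And>i. \<exists>h2. P h2 \<and> \<kappa> $ i = coth (u t x) - h2"
proof -
  obtain D where D: "((\<lambda>s. u s x) has_real_derivative D) (at t within time_int T)"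
    using radius_time_derivative[OF t(1) x] .
  obtain N where N: "outer_normal (u t) x N" using solution t x unfolding flow_solution_def by blast
  then obtain \<kappa> :: "real^'n" where \<kappa>: "principal_curvatures (u t) x N \<kappa>"
    using solution t x unfolding flow_solution_def by blast
  note curvatures = principal_curvatures_at_critical_point[OF x radius_pos[OF t(1) x] crit N \<kappa>]
  show ?thesis
    using radius_speed_at_critical_point[OF t x D N curvatures(1) \<kappa>] curvatures(2)
    by (intro that[OF D]) auto
qed

lemma radius_speed_at_spatial_max:
  assumes t: "t \<in> time_int T" "0 < t" and x: "x \<in> sphere_n"
    and max: "\<And>y. y \<in> sphere_n \<Longrightarrow> u t y \<le> u t x"
  obtains D where "((\<lambda>s. u s x) has_real_derivative D) (at t within time_int T)"
    "D \<le> (real CARD('n) * coth (u t x)) powr (- p)"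
proof -
  have "\<exists>h1 h2. (\<forall>s. ((\<lambda>s. u t ((x + s *\<^sub>R v) /\<^sub>R norm (x + s *\<^sub>R v))) has_real_derivative h1 s) (at s)) \<and>
      (h1 has_real_derivative h2) (at 0) \<and> h1 0 = 0 \<and> h2 \<le> 0" if v: "v \<in> tang x" for v
  proof -
    obtain h1 h2 where
      hd: "\<And>s. ((\<lambda>s. u t ((x + s *\<^sub>R v) /\<^sub>R norm (x + s *\<^sub>R v))) has_real_derivative h1 s) (at s)"
      and h1d: "(h1 has_real_derivative h2) (at 0)"
      using radius_spatial_derivatives[OF t(1) x v] by blast
    show ?thesis
      using DERIV_global_max_second_order[OF hd h1d] max[OF curve_in_sphere_n[OF x v]] x hd h1d
      unfolding sphere_n_def by force
  qed
  then obtain D \<kappa> where D: "((\<lambda>s. u s x) has_real_derivative D) (at t within time_int T)"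
    and \<kappa>: "\<kappa> \<in> \<Gamma>" "D = F \<kappa> powr (- p)" and second: "\<And>i. \<exists>h2. h2 \<le> 0 \<and> \<kappa> $ i = coth (u t x) - h2"
    using radius_speed_at_extremum[OF t x, of "\<lambda>h2. h2 \<le> 0"] by blast
  have "\<kappa> $ i \<ge> coth (u t x)" for i using second[of i] by auto
  moreover have L: "0 < coth (u t x)" using coth_gt_one[OF radius_pos[OF t(1) x]] by simp
  ultimately have "real CARD('n) * coth (u t x) \<le> F \<kappa>"
    using admissible_F_ge_const[OF admissible] by blast
  moreover have "0 < real CARD('n) * coth (u t x)" using L by (intro mult_pos_pos) auto
  ultimately have "D \<le> (real CARD('n) * coth (u t x)) powr (- p)"
    using \<kappa> p_pos powr_mono2'[of "- p" "real CARD('n) * coth (u t x)" "F \<kappa>"] by simp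
  with D show ?thesis by (rule that)
qed

lemma radius_speed_at_spatial_min:
  assumes t: "t \<in> time_int T" "0 < t" and x: "x \<in> sphere_n"
    and min: "\<And>y. y \<in> sphere_n \<Longrightarrow> u t x \<le> u t y"
  obtains D where "((\<lambda>s. u s x) has_real_derivative D) (at t within time_int T)"
    "(real CARD('n) * coth (u t x)) powr (- p) \<le> D"
proof -
  have "\<exists>h1 h2. (\<forall>s. ((\<lambda>s. u t ((x + s *\<^sub>R v) /\<^sub>R norm (x + s *\<^sub>R v))) has_real_derivative h1 s) (at s)) \<and>
      (h1 has_real_derivative h2) (at 0) \<and> h1 0 = 0 \<and> h2 \<ge> 0" if v: "v \<in> tang x" for v
  proof -
    obtain h1 h2 where
      hd: "\<And>s. ((\<lambda>s. u t ((x + s *\<^sub>R v) /\<^sub>R norm (x + s *\<^sub>R v))) has_real_derivative h1 s) (at s)"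
      and h1d: "(h1 has_real_derivative h2) (at 0)"
      using radius_spatial_derivatives[OF t(1) x v] by blast
    show ?thesis
      using DERIV_global_min_second_order[OF hd h1d] min[OF curve_in_sphere_n[OF x v]] x hd h1d
      unfolding sphere_n_def by force
  qed
  then obtain D \<kappa> where D: "((\<lambda>s. u s x) has_real_derivative D) (at t within time_int T)"
    and \<kappa>: "\<kappa> \<in> \<Gamma>" "D = F \<kappa> powr (- p)" and second: "\<And>i. \<exists>h2. h2 \<ge> 0 \<and> \<kappa> $ i = coth (u t x) - h2"
    using radius_speed_at_extremum[OF t x, of "\<lambda>h2. h2 \<ge> 0"] by blast
  have "\<kappa> $ i \<le> coth (u t x)" for i using second[of i] by auto
  moreover have L: "0 < coth (u t x)" using coth_gt_one[OF radius_pos[OF t(1) x]] by simp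
  ultimately have "F \<kappa> \<le> real CARD('n) * coth (u t x)"
    using admissible_F_le_const[OF admissible \<kappa>(1)] by blast
  moreover have "0 < F \<kappa>" using admissible \<kappa>(1) unfolding admissible_F_def by blast
  ultimately have "(real CARD('n) * coth (u t x)) powr (- p) \<le> D"
    using \<kappa> p_pos powr_mono2'[of "- p" "F \<kappa>" "real CARD('n) * coth (u t x)"] by simp
  with D show ?thesis by (rule that)
qed

lemma initial_radius_bounds:
  obtains m M where "0 < m" "\<And>y. y \<in> sphere_n \<Longrightarrow> m \<le> u 0 y \<and> u 0 y \<le> M"
proof -
  have "continuous_on sphere_n (\<lambda>y. u 0 y)"
    using continuous_on_compose2[OF continuous_on_radius[OF zero_in_time_int], of sphere_n "\<lambda>y. (0, y)"]
    by (force intro!: continuous_intros)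
  then obtain x_min x_max where "x_min \<in> sphere_n" "\<And>y. y \<in> sphere_n \<Longrightarrow> u 0 x_min \<le> u 0 y"
    and "\<And>y. y \<in> sphere_n \<Longrightarrow> u 0 y \<le> u 0 x_max"
    using continuous_attains_inf[OF compact_sphere_n sphere_n_nonempty]
      continuous_attains_sup[OF compact_sphere_n sphere_n_nonempty] by metis
  with radius_pos[OF zero_in_time_int] show ?thesis by (intro that[of "u 0 x_min" "u 0 x_max"]) auto
qed

lemma radius_upper_bound:
  obtains A where "\<And>t x. t \<in> time_int T \<Longrightarrow> x \<in> sphere_n \<Longrightarrow> u t x \<le> A + t / real CARD('n) powr p"
proof -
  obtain M where M: "\<And>y. y \<in> sphere_n \<Longrightarrow> u 0 y \<le> M" using initial_radius_bounds by metis
  define np where "np = real CARD('n) powr p"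
  have np: "0 < np" unfolding np_def by simp
  have "u t x - (M + 1 + t / np) < 0" if t: "t \<in> time_int T" and x: "x \<in> sphere_n" for t x
  proof (rule negative_by_maximum_principle[where \<psi> = "\<lambda>s y. u s y - (M + 1 + s / np)",
        OF compact_sphere_n _ _ _ x])
    show "continuous_on ({0..t} \<times> sphere_n) (\<lambda>z. u (fst z) (snd z) - (M + 1 + fst z / np))"
      by (intro continuous_intros continuous_on_radius[OF t]) (use np in auto)
    show "0 \<le> t" using t unfolding time_int_def by simp
    show "u 0 y - (M + 1 + 0 / np) < 0" if "y \<in> sphere_n" for y using M[OF that] by simp
    fix t1 x1 assume t1: "0 < t1" "t1 \<le> t" and x1: "x1 \<in> sphere_n"
      and "\<forall>y\<in>sphere_n. u t1 y - (M + 1 + t1 / np) \<le> u t1 x1 - (M + 1 + t1 / np)"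
    then have max: "\<And>y. y \<in> sphere_n \<Longrightarrow> u t1 y \<le> u t1 x1" by auto
    have t1T: "t1 \<in> time_int T" using time_int_atLeastAtMost[OF t] t1 by auto
    obtain D where D: "((\<lambda>s. u s x1) has_real_derivative D) (at t1 within time_int T)"
      and D_le: "D \<le> (real CARD('n) * coth (u t1 x1)) powr (- p)"
      using radius_speed_at_spatial_max[OF t1T t1(1) x1 max] by blast
    have "(real CARD('n) * coth (u t1 x1)) powr (- p) < real CARD('n) powr (- p)"
      by (rule powr_neg_mult_less[OF _ coth_gt_one[OF radius_pos[OF t1T x1]] p_pos]) simp
    then have "(real CARD('n) * coth (u t1 x1)) powr (- p) < 1 / np"
      unfolding np_def by (metis powr_minus_divide)
    moreover have "((\<lambda>s. u s x1 - (M + 1 + s / np)) has_real_derivative D - 1 / np) (at t1 within {0..t1})"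
      using has_field_derivative_subset[OF D time_int_atLeastAtMost[OF t1T]] np
      by (auto intro!: derivative_eq_intros)
    ultimately show "\<exists>D<0. ((\<lambda>s. u s x1 - (M + 1 + s / np)) has_real_derivative D) (at t1 within {0..t1})"
      using D_le by (intro exI[of _ "D - 1 / np"]) auto
  qed
  then show ?thesis by (intro that[of "M + 1"]) (fastforce simp: np_def)
qed

lemma radius_lower_bound:
  obtains r0 where "0 < r0" "\<And>t x. t \<in> time_int T \<Longrightarrow> x \<in> sphere_n \<Longrightarrow> r0 \<le> u t x"
proof -
  obtain m where m: "0 < m" "\<And>y. y \<in> sphere_n \<Longrightarrow> m \<le> u 0 y" using initial_radius_bounds by metis
  have "m / 2 - u t x < 0" if t: "t \<in> time_int T" and x: "x \<in> sphere_n" for t x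
  proof (rule negative_by_maximum_principle[where \<psi> = "\<lambda>s y. m / 2 - u s y",
        OF compact_sphere_n _ _ _ x])
    show "continuous_on ({0..t} \<times> sphere_n) (\<lambda>z. m / 2 - u (fst z) (snd z))"
      by (intro continuous_intros continuous_on_radius[OF t])
    show "0 \<le> t" using t unfolding time_int_def by simp
    show "m / 2 - u 0 y < 0" if "y \<in> sphere_n" for y using m(1) m(2)[OF that] by simp
    fix t1 x1 assume t1: "0 < t1" "t1 \<le> t" and x1: "x1 \<in> sphere_n"
      and "\<forall>y\<in>sphere_n. m / 2 - u t1 y \<le> m / 2 - u t1 x1"
    then have min: "\<And>y. y \<in> sphere_n \<Longrightarrow> u t1 x1 \<le> u t1 y" by auto
    have t1T: "t1 \<in> time_int T" using time_int_atLeastAtMost[OF t] t1 by auto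
    obtain D where D: "((\<lambda>s. u s x1) has_real_derivative D) (at t1 within time_int T)"
      and D_ge: "(real CARD('n) * coth (u t1 x1)) powr (- p) \<le> D"
      using radius_speed_at_spatial_min[OF t1T t1(1) x1 min] by blast
    have "((\<lambda>s. m / 2 - u s x1) has_real_derivative - D) (at t1 within {0..t1})"
      using has_field_derivative_subset[OF D time_int_atLeastAtMost[OF t1T]]
      by (auto intro!: derivative_eq_intros)
    moreover have "0 < D"
      by (rule less_le_trans[OF _ D_ge]) (use radius_pos[OF t1T x1] in simp)
    ultimately show "\<exists>D<0. ((\<lambda>s. m / 2 - u s x1) has_real_derivative D) (at t1 within {0..t1})"
      using D_ge by (intro exI[of _ "- D"]) auto
  qed
  then show ?thesis using m(1) by (intro that[of "m / 2"]) fastforce+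
qed

text \<open>At a spatial minimum \<open>u\<close> itself may grow slower than \<open>t / n\<^sup>p\<close>, as
  \<open>(n coth u)\<^sup>-\<^sup>p < n\<^sup>-\<^sup>p\<close>; the gauge of \<open>u\<close>, which stays below \<open>u\<close>, grows faster.\<close>
lemma radius_growth_lower_bound:
  obtains B where "\<And>t x. t \<in> time_int T \<Longrightarrow> x \<in> sphere_n \<Longrightarrow> B + t / real CARD('n) powr p \<le> u t x"
proof -
  obtain m where m: "0 < m" "\<And>y. y \<in> sphere_n \<Longrightarrow> m \<le> u 0 y" using initial_radius_bounds by metis
  obtain r0 where r0: "0 < r0" "\<And>t x. t \<in> time_int T \<Longrightarrow> x \<in> sphere_n \<Longrightarrow> r0 \<le> u t x"
    using radius_lower_bound by metis
  define C where "C = p * exp (p * (coth r0 - 1)) + 1"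
  have C: "0 \<le> C" unfolding C_def using p_pos by simp
  define np where "np = real CARD('n) powr p"
  have np: "0 < np" unfolding np_def by simp
  define B where "B = radius_gauge C m - 1"
  define \<psi> where "\<psi> s y = B + s / np - radius_gauge C (u s y)" for s y
  have "\<psi> t x < 0" if t: "t \<in> time_int T" and x: "x \<in> sphere_n" for t x
  proof (rule negative_by_maximum_principle[where \<psi> = \<psi>, OF compact_sphere_n _ _ _ x])
    have "continuous_on ({0..t} \<times> sphere_n) (\<lambda>z. radius_gauge C (u (fst z) (snd z)))"
      by (rule continuous_on_compose2[OF continuous_on_radius_gauge continuous_on_radius[OF t]])
        (use radius_pos time_int_atLeastAtMost[OF t] in auto)
    then show "continuous_on ({0..t} \<times> sphere_n) (\<lambda>z. \<psi> (fst z) (snd z))"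
      unfolding \<psi>_def by (intro continuous_intros) (use np in auto)
    show "0 \<le> t" using t unfolding time_int_def by simp
    show "\<psi> 0 y < 0" if "y \<in> sphere_n" for y
      using m(2)[OF that] radius_gauge_le_iff[OF m(1) radius_pos[OF zero_in_time_int that] C]
      unfolding \<psi>_def B_def by auto
    fix t1 x1 assume t1: "0 < t1" "t1 \<le> t" and x1: "x1 \<in> sphere_n"
      and max: "\<forall>y\<in>sphere_n. \<psi> t1 y \<le> \<psi> t1 x1"
    have t1T: "t1 \<in> time_int T" using time_int_atLeastAtMost[OF t] t1 by auto
    have min: "u t1 x1 \<le> u t1 y" if "y \<in> sphere_n" for y
      using max that radius_gauge_le_iff[OF radius_pos[OF t1T x1] radius_pos[OF t1T that] C]
      unfolding \<psi>_def by auto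
    obtain D where D: "((\<lambda>s. u s x1) has_real_derivative D) (at t1 within time_int T)"
      and D_ge: "(real CARD('n) * coth (u t1 x1)) powr (- p) \<le> D"
      using radius_speed_at_spatial_min[OF t1T t1(1) x1 min] by blast
    define slope where "slope = 1 + C * (coth (u t1 x1) - 1)"
    have "1 / np < slope * D"
      unfolding slope_def C_def np_def
      by (rule radius_gauge_rate_gt[OF _ p_pos r0(1) r0(2)[OF t1T x1] D_ge]) simp
    then have "1 / np - slope * D < 0" by simp
    moreover have "((\<lambda>s. \<psi> s x1) has_real_derivative 1 / np - slope * D) (at t1 within {0..t1})"
      unfolding \<psi>_def slope_def
      using DERIV_chain2[OF radius_gauge_has_derivative[OF radius_pos[OF t1T x1]]
          has_field_derivative_subset[OF D time_int_atLeastAtMost[OF t1T]]] np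
      by (auto intro!: derivative_eq_intros)
    ultimately show "\<exists>D<0. ((\<lambda>s. \<psi> s x1) has_real_derivative D) (at t1 within {0..t1})" by blast
  qed
  then have "B + t / np \<le> u t x" if "t \<in> time_int T" "x \<in> sphere_n" for t x
    using radius_gauge_le[OF radius_pos[OF that] C] that unfolding \<psi>_def by fastforce
  then show ?thesis unfolding np_def by (rule that)
qed

end

theorem corollary3p6:
  fixes \<Gamma> :: "(real^'n) set" and F :: "real^'n \<Rightarrow> real" and p :: real
    and u :: "real \<Rightarrow> real^'m \<Rightarrow> real" and T :: ereal
  assumes "CARD('n) \<ge> 2" and "CARD('m) = CARD('n) + 1"
    and "admissible_F \<Gamma> F"
    and "p > 0" and "p > 1 \<longrightarrow> \<Gamma> = pos_cone"
    and "maximal_flow_solution \<Gamma> F p u T"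
  shows "\<exists>c>0. \<forall>t\<in>time_int T. \<forall>x\<in>sphere_n.
           0 < 1 / c \<and>
           1 / c \<le> sinh (u t x) * exp (- t / real CARD('n) powr p) \<and>
           sinh (u t x) * exp (- t / real CARD('n) powr p) \<le> c \<and>
           cosh (u t x) / sinh (u t x) - 1 \<le> c * exp (- (2 / real CARD('n) powr p) * t)"
proof -
  interpret radial_flow \<Gamma> F p u T
    using assms unfolding maximal_flow_solution_def by unfold_locales auto
  obtain A where upper: "\<And>t x. t \<in> time_int T \<Longrightarrow> x \<in> sphere_n \<Longrightarrow> u t x \<le> A + t / real CARD('n) powr p"
    using radius_upper_bound by blast
  obtain B where lower: "\<And>t x. t \<in> time_int T \<Longrightarrow> x \<in> sphere_n \<Longrightarrow> B + t / real CARD('n) powr p \<le> u t x"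
    using radius_growth_lower_bound by blast
  obtain r0 where "0 < r0" and r0: "\<And>t x. t \<in> time_int T \<Longrightarrow> x \<in> sphere_n \<Longrightarrow> r0 \<le> u t x"
    using radius_lower_bound by blast
  show ?thesis
    using sinh_exp_bounds_of_linear_bounds[OF \<open>0 < r0\<close>, where N = "real CARD('n) powr p"]
      upper lower r0 by (metis divide_pos_pos zero_less_one)
qed

end
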